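(* Let $\alpha,\beta$ be relatively prime positive integers and $n$ a positive integer with $s=s(n)>2$. If $(b,a)$ is $n$-good, then $a\le(\beta-1)g_s+\alpha b$.
   Context: The $(\alpha,\beta)$-walk $w_k(a_1,a_2)$ for positive integers $a_1,a_2$ is given by $w_1=a_1$, $w_2=a_2$, $w_{k+2}=\alpha w_{k+1}+\beta w_k$ ($k\ge1$). For a positive integer $n$, $s(n;a_1,a_2)$ is the (largest) index $s$ with $w_s(a_1,a_2)=n$ ($-\infty$ if none), and $s(n)=\max_{a_1,a_2\ge1}s(n;a_1,a_2)$. A pair $(a_1,a_2)$ with $a_1,a_2\ge1$ is $n$-good if $s(n;a_1,a_2)=s(n)$. The sequence $g_k$: $g_1=1$, $g_2=\alpha$, $g_{k+2}=\alpha g_{k+1}+\beta g_k$ for $k\ge1$. *)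

theory Defs
  imports Main
begin

text \<open>The (alpha,beta)-walk, 1-indexed: walk al be a1 a2 k = w_k(a1,a2) for k >= 1
  (index 0 is unused and set to 0).\<close>
fun walk :: "nat \<Rightarrow> nat \<Rightarrow> nat \<Rightarrow> nat \<Rightarrow> nat \<Rightarrow> nat" where
  "walk al be a1 a2 0 = 0"
| "walk al be a1 a2 (Suc 0) = a1"
| "walk al be a1 a2 (Suc (Suc 0)) = a2"
| "walk al be a1 a2 (Suc (Suc (Suc k))) =
     al * walk al be a1 a2 (Suc (Suc k)) + be * walk al be a1 a2 (Suc k)"

fun gseq :: "nat \<Rightarrow> nat \<Rightarrow> nat \<Rightarrow> nat" where
  "gseq al be 0 = 0"
| "gseq al be (Suc 0) = 1"
| "gseq al be (Suc (Suc 0)) = al"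
| "gseq al be (Suc (Suc (Suc k))) =
     al * gseq al be (Suc (Suc k)) + be * gseq al be (Suc k)"

text \<open>s(n;a1,a2): the largest index s >= 1 with w_s = n; the value -infinity
  (no such index) is encoded as 0, which is never a valid index.\<close>
definition sidx :: "nat \<Rightarrow> nat \<Rightarrow> nat \<Rightarrow> nat \<Rightarrow> nat \<Rightarrow> nat" where
  "sidx al be n a1 a2 =
     (let S = {k. 1 \<le> k \<and> walk al be a1 a2 k = n} in if S = {} then 0 else Max S)"

definition smax :: "nat \<Rightarrow> nat \<Rightarrow> nat \<Rightarrow> nat" where
  "smax al be n = Max {sidx al be n a1 a2 | a1 a2. 1 \<le> a1 \<and> 1 \<le> a2}"

definition good :: "nat \<Rightarrow> nat \<Rightarrow> nat \<Rightarrow> nat \<Rightarrow> nat \<Rightarrow> bool" where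
  "good al be n a1 a2 \<longleftrightarrow> 1 \<le> a1 \<and> 1 \<le> a2 \<and> sidx al be n a1 a2 = smax al be n"

end

theory Submission
  imports Defs "HOL-Number_Theory.Cong"
begin

text \<open>Write \<open>s = s(n) = k + 2\<close>. Unrolling the recursion gives
  \<open>n = w\<^sub>s(b, a) = \<beta> g\<^sub>k b + g\<^sub>k\<^sub>+\<^sub>1 a = g\<^sub>k\<^sub>+\<^sub>1 c + g\<^sub>s b\<close> with \<open>c = a - \<alpha> b\<close>,
  while a walk one step longer reaches \<open>w\<^sub>s\<^sub>+\<^sub>1(x, y) = \<beta> g\<^sub>k\<^sub>+\<^sub>1 x + g\<^sub>s y\<close>.
  Since \<open>g\<^sub>s\<close> is prime to \<open>\<beta>\<close>, every \<open>c > (\<beta> - 1) g\<^sub>s\<close> can be written as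
  \<open>c = \<beta> x + g\<^sub>s v\<close> with \<open>x > 0\<close> and \<open>0 \<le> v < \<beta>\<close>; then \<open>y = b + g\<^sub>k\<^sub>+\<^sub>1 v\<close> gives
  \<open>w\<^sub>s\<^sub>+\<^sub>1(x, y) = n\<close>, contradicting the maximality of \<open>s\<close>.\<close>

lemma gseq_Suc_Suc: "gseq al be (Suc (Suc k)) = al * gseq al be (Suc k) + be * gseq al be k"
  by (cases k) auto

lemma walk_Suc_Suc_eq_gseq:
  "walk al be a1 a2 (Suc (Suc k)) = be * gseq al be k * a1 + gseq al be (Suc k) * a2"
proof (induction k rule: induct_nat_012)
  case (ge2 k)
  have "walk al be a1 a2 (Suc (Suc (Suc (Suc k))))
      = al * walk al be a1 a2 (Suc (Suc (Suc k))) + be * walk al be a1 a2 (Suc (Suc k))"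
    by simp
  also have "\<dots> = al * (be * gseq al be (Suc k) * a1 + gseq al be (Suc (Suc k)) * a2)
      + be * (be * gseq al be k * a1 + gseq al be (Suc k) * a2)"
    by (simp only: ge2)
  also have "\<dots> = be * gseq al be (Suc (Suc k)) * a1 + gseq al be (Suc (Suc (Suc k))) * a2"
    unfolding gseq_Suc_Suc[of al be "Suc k"] gseq_Suc_Suc[of al be k] by (simp add: algebra_simps)
  finally show ?case .
qed simp_all

lemma walk_pos:
  assumes "0 < al" "1 \<le> a1" "1 \<le> a2" "1 \<le> k"
  shows "0 < walk al be a1 a2 k"
  using assms by (induction al be a1 a2 k rule: walk.induct) auto

lemma index_le_Suc_walk:
  assumes "0 < al" "0 < be" "1 \<le> a1" "1 \<le> a2"
  shows "k \<le> Suc (walk al be a1 a2 k)"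
  using assms
proof (induction al be a1 a2 k rule: walk.induct)
  case (4 al be a1 a2 k)
  have "1 \<le> be * walk al be a1 a2 (Suc k)"
    using walk_pos[of al a1 a2 "Suc k" be] "4.prems" by simp
  moreover have "walk al be a1 a2 (Suc (Suc k)) \<le> al * walk al be a1 a2 (Suc (Suc k))"
    using "4.prems"(1) by simp
  ultimately show ?case
    using "4.IH"(1)[OF "4.prems"] by (simp only: walk.simps)
qed auto

lemma walk_hits_atMost:
  assumes "0 < al" "0 < be" "1 \<le> a1" "1 \<le> a2"
  shows "{k. 1 \<le> k \<and> walk al be a1 a2 k = n} \<subseteq> {..Suc n}"
  using index_le_Suc_walk[OF assms] by auto

lemma finite_walk_hits:
  assumes "0 < al" "0 < be" "1 \<le> a1" "1 \<le> a2"
  shows "finite {k. 1 \<le> k \<and> walk al be a1 a2 k = n}"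
  using walk_hits_atMost[OF assms] by (rule finite_subset) simp

lemma sidx_le_Suc:
  assumes "0 < al" "0 < be" "1 \<le> a1" "1 \<le> a2"
  shows "sidx al be n a1 a2 \<le> Suc n"
  using finite_walk_hits[OF assms, of n] walk_hits_atMost[OF assms, of n]
  unfolding sidx_def Let_def by (auto intro!: Max.boundedI)

lemma le_sidx:
  assumes "0 < al" "0 < be" "1 \<le> a1" "1 \<le> a2" "1 \<le> k" "walk al be a1 a2 k = n"
  shows "k \<le> sidx al be n a1 a2"
  using finite_walk_hits[OF assms(1-4), of n] assms(5,6)
  unfolding sidx_def Let_def by (auto intro!: Max_ge)

lemma walk_sidx:
  assumes "0 < al" "0 < be" "1 \<le> a1" "1 \<le> a2" "0 < sidx al be n a1 a2"
  shows "walk al be a1 a2 (sidx al be n a1 a2) = n"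
proof -
  let ?S = "{k. 1 \<le> k \<and> walk al be a1 a2 k = n}"
  have "?S \<noteq> {}" and sidx: "sidx al be n a1 a2 = Max ?S"
    using assms(5) unfolding sidx_def Let_def by (auto split: if_splits)
  then show ?thesis
    using Max_in[OF finite_walk_hits[OF assms(1-4)]] by auto
qed

lemma sidx_le_smax:
  assumes "0 < al" "0 < be" "1 \<le> a1" "1 \<le> a2"
  shows "sidx al be n a1 a2 \<le> smax al be n"
proof -
  have "{sidx al be n a1 a2 | a1 a2. 1 \<le> a1 \<and> 1 \<le> a2} \<subseteq> {..Suc n}"
    using sidx_le_Suc[OF assms(1,2)] by auto
  then have "finite {sidx al be n a1 a2 | a1 a2. 1 \<le> a1 \<and> 1 \<le> a2}"
    by (rule finite_subset) simp
  then show ?thesis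
    unfolding smax_def using assms(3,4) by (auto intro!: Max_ge)
qed

lemma coprime_gseq:
  assumes "coprime al be"
  shows "coprime (gseq al be (Suc k)) be"
proof (induction k rule: induct_nat_012)
  case (ge2 k)
  have "coprime (al * gseq al be (Suc (Suc k))) be"
    using ge2(2) assms by simp
  then show ?case
    using gseq_Suc_Suc[of al be "Suc k"]
    by (metis coprime_iff_gcd_eq_1 gcd.commute gcd_add_mult add.commute mult.commute)
qed (use assms in simp_all)

lemma coprime_obtain_pos_mult_plus_bounded_mult:
  fixes G m c :: nat
  assumes "coprime G m" "0 < m" "(m - 1) * G < c"
  obtains x v where "0 < x" "v < m" "c = m * x + G * v"
proof -
  obtain u where u: "[G * u = 1] (mod m)"
    using cong_solve_coprime_nat[OF assms(1)] by auto
  define v where "v = u * c mod m"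
  have v_less: "v < m"
    unfolding v_def using assms(2) by simp
  have "[G * v = G * u * c] (mod m)"
    unfolding v_def by (simp add: cong_def mod_mult_right_eq mult.assoc)
  also have "[G * u * c = 1 * c] (mod m)"
    using u by (rule cong_scalar_right)
  finally have cong: "[c = G * v] (mod m)"
    by (simp add: cong_sym)
  have "G * v \<le> G * (m - 1)"
    using v_less by (intro mult_le_mono2) linarith
  then have less_c: "G * v < c"
    using assms(3) by (metis le_less_trans mult.commute)
  then obtain q where "c = q * m + G * v"
    using cong cong_le_nat[of "G * v" c m] by auto
  moreover have "0 < q"
    using less_c \<open>c = q * m + G * v\<close> by (cases q) auto
  ultimately show ?thesis
    using that v_less by (simp add: mult.commute)
qed

lemma walk_one_step_longer:
  assumes "coprime al be" "0 < be" "1 \<le> a1"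
    and large: "(be - 1) * gseq al be (Suc (Suc k)) + al * a1 < a2"
  obtains x y where "1 \<le> x" "1 \<le> y"
    "walk al be x y (Suc (Suc (Suc k))) = walk al be a1 a2 (Suc (Suc k))"
proof -
  let ?g = "gseq al be"
  define c where "c = a2 - al * a1"
  have a2: "a2 = c + al * a1"
    unfolding c_def using large by simp
  obtain x v where x: "0 < x" and c: "c = be * x + ?g (Suc (Suc k)) * v"
    using coprime_obtain_pos_mult_plus_bounded_mult[OF coprime_gseq[OF assms(1), of "Suc k"] assms(2)]
      large c_def by (metis less_diff_conv)
  define y where "y = a1 + ?g (Suc k) * v"
  have "walk al be x y (Suc (Suc (Suc k))) = be * ?g (Suc k) * x + ?g (Suc (Suc k)) * y"
    by (rule walk_Suc_Suc_eq_gseq)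
  also have "\<dots> = ?g (Suc k) * c + ?g (Suc (Suc k)) * a1"
    unfolding y_def c by (simp add: algebra_simps)
  also have "\<dots> = walk al be a1 a2 (Suc (Suc k))"
    unfolding walk_Suc_Suc_eq_gseq a2 gseq_Suc_Suc[of al be k] by (simp add: algebra_simps)
  finally have reach: "walk al be x y (Suc (Suc (Suc k))) = walk al be a1 a2 (Suc (Suc k))" .
  show ?thesis
    by (rule that[OF _ _ reach]) (use x assms(3) in \<open>auto simp: y_def\<close>)
qed

theorem lemma2p6:
  fixes al be n a b :: nat
  assumes "0 < al" and "0 < be" and "coprime al be" and "0 < n"
    and "smax al be n > 2"
    and "good al be n b a"
  shows "a \<le> (be - 1) * gseq al be (smax al be n) + al * b"
proof (rule ccontr)
  define s where "s = smax al be n"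
  have "s = Suc (Suc (s - 2))"
    using assms(5) unfolding s_def by simp
  then obtain k where s: "s = Suc (Suc k)" by blast
  have b: "1 \<le> b" and a: "1 \<le> a" and sidx: "sidx al be n b a = s"
    using assms(6) unfolding good_def s_def by auto
  have "walk al be b a (sidx al be n b a) = n"
    by (rule walk_sidx[OF assms(1,2) b a]) (simp add: sidx s)
  then have n: "walk al be b a s = n"
    unfolding sidx .
  assume "\<not> ?thesis"
  then have large: "(be - 1) * gseq al be (Suc (Suc k)) + al * b < a"
    unfolding s_def[symmetric] s by simp
  obtain x y where x: "1 \<le> x" and y: "1 \<le> y"
    and "walk al be x y (Suc s) = walk al be b a s"
    unfolding s by (rule walk_one_step_longer[OF assms(3,2) b large])
  with n have "walk al be x y (Suc s) = n"
    by simp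
  then have "Suc s \<le> sidx al be n x y"
    using le_sidx[OF assms(1,2) x y] by simp
  also have "\<dots> \<le> s"
    unfolding s_def using sidx_le_smax[OF assms(1,2) x y] .
  finally show False by simp
qed

end
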